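(* Let $n=2k$. Let $g$ be a bent Boolean function on $\mathbb{F}_{2^n}$ whose dual $g^*$ satisfies property $(\mathbf{P}_\tau)$ with defining set $\{u_1,\ldots,u_\tau\}$, i.e. $u_1,\ldots,u_\tau\in\mathbb{F}_{2^n}$ are pairwise distinct and $D_{u_i}D_{u_j}g^*=0$ for all $1\le i<j\le\tau$. Let $F(X_1,\ldots,X_\tau)$ be any reduced polynomial in $\mathbb{F}_2[X_1,\ldots,X_\tau]$. Then the Boolean function $g(x)+F(\mathrm{Tr}^n_1(u_1x),\ldots,\mathrm{Tr}^n_1(u_\tau x))$ is bent, with dual $g^*(x)+F(D_{u_1}g^*(x),\ldots,D_{u_\tau}g^*(x))$.
   Context: $\mathrm{Tr}^n_1(x)=\sum_{i=0}^{n-1}x^{2^i}$. For a Boolean function $f$ on $\mathbb{F}_{2^n}$, $W_f(a)=\sum_x(-1)^{f(x)+\mathrm{Tr}^n_1(ax)}$; $f$ is bent if $|W_f(a)|=2^{n/2}$ for all $a$, with dual $f^*$ defined by $W_f(a)=2^{n/2}(-1)^{f^*(a)}$. $D_af(x)=f(x)+f(x+a)$, $D_aD_bf(x)=f(x)+f(x+a)+f(x+b)+f(x+a+b)$. A reduced polynomial in $\mathbb{F}_2[X_1,\ldots,X_\tau]$ is one of the form $\sum_{I\subseteq\{1,\ldots,\tau\}}a_I\prod_{i\in I}X_i$, $a_I\in\mathbb{F}_2$. *)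

theory Defs
  imports Main
begin

definition tr :: "nat \<Rightarrow> 'a::field \<Rightarrow> 'a" where
  "tr n x = (\<Sum>i<n. x ^ (2 ^ i))"

definition trb :: "nat \<Rightarrow> 'a::field \<Rightarrow> bool" where
  "trb n x = (tr n x = 1)"

text \<open>Boolean functions are maps 'a => bool; addition in F_2 is exclusive or (\<noteq>).
  Walsh transform W_f(a) = sum_x (-1)^(f(x) + Tr(ax)).\<close>
definition walsh :: "nat \<Rightarrow> ('a::{finite,field} \<Rightarrow> bool) \<Rightarrow> 'a \<Rightarrow> int" where
  "walsh n f a = (\<Sum>x\<in>UNIV. if f x \<noteq> trb n (a * x) then -1 else 1)"

definition bent :: "nat \<Rightarrow> ('a::{finite,field} \<Rightarrow> bool) \<Rightarrow> bool" where
  "bent n f \<longleftrightarrow> (\<forall>a. \<bar>walsh n f a\<bar> = 2 ^ (n div 2))"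

definition is_dual :: "nat \<Rightarrow> ('a::{finite,field} \<Rightarrow> bool) \<Rightarrow> ('a \<Rightarrow> bool) \<Rightarrow> bool" where
  "is_dual n f fs \<longleftrightarrow> (\<forall>a. walsh n f a = 2 ^ (n div 2) * (if fs a then -1 else 1))"

definition D :: "'a::plus \<Rightarrow> ('a \<Rightarrow> bool) \<Rightarrow> 'a \<Rightarrow> bool" where
  "D a f x = (f x \<noteq> f (x + a))"

text \<open>Reduced polynomial in F_2[X_1..X_tau] given by coefficients c I (I \<subseteq> {1..tau}),
  evaluated at the point xs (xs i = value of X_i): sum over I of c_I * prod_{i\<in>I} X_i in F_2.\<close>
definition reduced_poly_eval :: "nat \<Rightarrow> (nat set \<Rightarrow> bool) \<Rightarrow> (nat \<Rightarrow> bool) \<Rightarrow> bool" where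
  "reduced_poly_eval \<tau> c xs = odd (card {I \<in> Pow {1..\<tau>}. c I \<and> (\<forall>i\<in>I. xs i)})"

end

theory Submission
  imports Defs
begin

text \<open>Write \<chi>(b) = (-1)^b. In characteristic 2 the Boolean trace is additive, so
  x \<mapsto> \<chi>(Tr(v x)) is a character and multiplying by it shifts the Walsh transform by v.
  Splitting F on its last variable t into the cofactors F_0 (t = 0) and F_1 (t = 1),
  \<chi>(F) = \<chi>(F_0) (1 + \<chi>(t))/2 + \<chi>(F_1) (1 - \<chi>(t))/2, so the Walsh transform of
  g + F(Tr(u_1 x), ..., Tr(u_\<tau> x)) at a is a combination of those of g + F_0(...) and
  g + F_1(...) at a and at a + u_\<tau>. By induction on the number of variables these are
  2^(n/2) \<chi>(g*(b) + F_e(D_u_1 g*(b), ...)); the hypothesis D_u_i D_u_\<tau> g* = 0 says exactly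
  that the arguments D_u_i g*(b), i < \<tau>, agree at b = a and b = a + u_\<tau>, while
  g*(a + u_\<tau>) = g*(a) + D_u_\<tau> g*(a) supplies the value of the last variable.\<close>

lemma add_self_char2:
  fixes x :: "'a::field" assumes "(1::'a) + 1 = 0" shows "x + x = 0"
  by (metis assms distrib_right mult_1 mult_zero_left)

lemma power2_add_char2:
  fixes a b :: "'a::field" assumes "(1::'a) + 1 = 0" shows "(a + b)^2 = a^2 + b^2"
proof -
  have "(a + b)^2 = a^2 + b^2 + (a*b + a*b)" by (simp add: power2_eq_square algebra_simps)
  then show ?thesis using add_self_char2[OF assms, of "a*b"] by simp
qed

lemma power_two_power_add_char2:
  fixes a b :: "'a::field" assumes "(1::'a) + 1 = 0"
  shows "(a + b)^(2^i) = a^(2^i) + b^(2^i)"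
proof (induction i)
  case (Suc i)
  have "(a + b)^(2^Suc i) = ((a + b)^(2^i))^2" by (simp add: power_mult[symmetric] mult.commute)
  also have "\<dots> = a^(2^Suc i) + b^(2^Suc i)"
    using Suc power2_add_char2[OF assms] by (simp add: power_mult[symmetric] mult.commute)
  finally show ?case .
qed simp

lemma power2_sum_char2:
  fixes f :: "'b \<Rightarrow> 'a::field" assumes "(1::'a) + 1 = 0"
  shows "(\<Sum>i\<in>A. f i)^2 = (\<Sum>i\<in>A. (f i)^2)"
  by (induction A rule: infinite_finite_induct) (simp_all add: power2_add_char2[OF assms])

lemma finite_field_power_card:
  fixes x :: "'a::{finite,field}"
  shows "x ^ card (UNIV :: 'a set) = x"
proof (cases "x = 0")
  case False
  have "x * (\<Prod>y\<in>UNIV-{0}. x * y) = x ^ Suc (card (UNIV :: 'a set) - 1) * \<Prod>(UNIV-{0})"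
    by (simp add: prod.distrib mult_ac)
  also have "Suc (card (UNIV :: 'a set) - 1) = card (UNIV :: 'a set)"
    using finite_UNIV_card_ge_0[where ?'a = 'a] by simp
  also have "(\<Prod>y\<in>UNIV-{0}. x * y) = (\<Prod>y\<in>UNIV-{0}. y)"
    by (rule prod.reindex_bij_witness[of _ "\<lambda>y. y / x" "\<lambda>y. x * y"]) (use False in auto)
  finally show ?thesis by simp
qed (use finite_UNIV_card_ge_0[where ?'a = 'a] in auto)

lemma tr_add:
  fixes x y :: "'a::field" assumes "(1::'a) + 1 = 0"
  shows "tr n (x + y) = tr n x + tr n y"
  unfolding tr_def by (simp add: power_two_power_add_char2[OF assms] sum.distrib)

lemma tr_square:
  fixes x :: "'a::{finite,field}"
  assumes "(1::'a) + 1 = 0" and "card (UNIV :: 'a set) = 2 ^ n"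
  shows "(tr n x)^2 = tr n x"
proof -
  have "x + (tr n x)^2 = (\<Sum>i<Suc n. x ^ (2 ^ i))"
    unfolding tr_def sum.lessThan_Suc_shift
    by (simp add: power2_sum_char2[OF assms(1)] power_mult[symmetric] mult.commute)
  also have "\<dots> = tr n x + x"
    using finite_field_power_card[of x] assms(2) by (simp add: tr_def)
  finally show ?thesis by (simp add: add.commute)
qed

lemma trb_add:
  fixes x y :: "'a::{finite,field}"
  assumes "(1::'a) + 1 = 0" and "card (UNIV :: 'a set) = 2 ^ n"
  shows "trb n (x + y) = (trb n x \<noteq> trb n y)"
proof -
  have "tr n z = 0 \<or> tr n z = 1" for z :: 'a
    using tr_square[OF assms, of z] by (simp add: power2_eq_square)
  then show ?thesis
    using assms(1) unfolding trb_def tr_add[OF assms(1)] by (metis add_0 add_0_right one_neq_zero)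
qed

definition chi :: "bool \<Rightarrow> int" where
  "chi b = (if b then -1 else 1)"

lemma chi_xor: "chi (p \<noteq> q) = chi p * chi q"
  by (simp add: chi_def)

lemma walsh_eq_sum_chi: "walsh n f a = (\<Sum>x\<in>UNIV. chi (f x) * chi (trb n (a * x)))"
  unfolding walsh_def chi_def by (rule sum.cong) auto

lemma walsh_xor_const: "walsh n (\<lambda>x. f x \<noteq> b) a = chi b * walsh n f a"
  unfolding walsh_eq_sum_chi chi_xor sum_distrib_left by (simp add: mult_ac)

lemma chi_if_split:
  "2 * (chi (if t then p\<^sub>1 else p\<^sub>0) * chi s)
     = chi p\<^sub>0 * chi s + chi p\<^sub>1 * chi s + chi p\<^sub>0 * chi (s \<noteq> t) - chi p\<^sub>1 * chi (s \<noteq> t)"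
  by (cases t; cases s) (simp_all add: chi_def)

lemma chi_cofactors:
  "chi (s \<noteq> p\<^sub>0) + chi (s \<noteq> p\<^sub>1) + chi ((s \<noteq> d) \<noteq> p\<^sub>0) - chi ((s \<noteq> d) \<noteq> p\<^sub>1)
     = 2 * chi (s \<noteq> (if d then p\<^sub>1 else p\<^sub>0))"
  by (simp add: chi_def)

lemma walsh_split_on_trace:
  fixes f\<^sub>0 f\<^sub>1 :: "'a::{finite,field} \<Rightarrow> bool"
  assumes trb_add: "\<And>x y :: 'a. trb n (x + y) = (trb n x \<noteq> trb n y)"
  shows "2 * walsh n (\<lambda>x. if trb n (v * x) then f\<^sub>1 x else f\<^sub>0 x) a
    = walsh n f\<^sub>0 a + walsh n f\<^sub>1 a + walsh n f\<^sub>0 (a + v) - walsh n f\<^sub>1 (a + v)"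
proof -
  have "2 * (chi (if trb n (v * x) then f\<^sub>1 x else f\<^sub>0 x) * chi (trb n (a * x)))
      = chi (f\<^sub>0 x) * chi (trb n (a * x)) + chi (f\<^sub>1 x) * chi (trb n (a * x))
      + chi (f\<^sub>0 x) * chi (trb n ((a + v) * x)) - chi (f\<^sub>1 x) * chi (trb n ((a + v) * x))" for x
    unfolding distrib_right trb_add by (rule chi_if_split)
  then show ?thesis
    unfolding walsh_eq_sum_chi sum_distrib_left by (simp add: sum.distrib sum_subtractf)
qed

definition depends_only_on :: "(('i \<Rightarrow> 'b) \<Rightarrow> 'c) \<Rightarrow> 'i set \<Rightarrow> bool" where
  "depends_only_on \<Phi> A \<longleftrightarrow> (\<forall>y y'. (\<forall>i\<in>A. y i = y' i) \<longrightarrow> \<Phi> y = \<Phi> y')"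

lemma depends_only_on_empty: "depends_only_on \<Phi> {} \<Longrightarrow> \<Phi> y = \<Phi> y'"
  unfolding depends_only_on_def by blast

lemma depends_only_on_fun_upd:
  "depends_only_on \<Phi> (insert j A) \<Longrightarrow> depends_only_on (\<lambda>y. \<Phi> (y(j := b))) A"
  unfolding depends_only_on_def by (metis fun_upd_other fun_upd_same insert_iff)

lemma reduced_poly_eval_depends_only_on: "depends_only_on (reduced_poly_eval \<tau> c) {1..\<tau>}"
  unfolding depends_only_on_def reduced_poly_eval_def
  by (intro allI impI arg_cong[where f = "\<lambda>S. odd (card S)"]) blast

lemma D_commute:
  fixes a b :: "'a::ab_semigroup_add"
  shows "D a (D b f) = D b (D a f)"
  unfolding D_def by (rule ext) (auto simp: ac_simps)

lemma D_shift: "\<not> D b (D a f) x \<Longrightarrow> D a f (x + b) = D a f x"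
  unfolding D_def by auto

lemma walsh_xor_traces:
  fixes g gs :: "'a::{finite,field} \<Rightarrow> bool" and u :: "'i \<Rightarrow> 'a" and K :: int
  assumes trb_add: "\<And>x y :: 'a. trb n (x + y) = (trb n x \<noteq> trb n y)"
    and dual: "\<And>b. walsh n g b = K * chi (gs b)"
    and "finite A" and "depends_only_on \<Phi> A"
    and "\<And>i j x. i \<in> A \<Longrightarrow> j \<in> A \<Longrightarrow> i \<noteq> j \<Longrightarrow> \<not> D (u i) (D (u j) gs) x"
  shows "walsh n (\<lambda>x. g x \<noteq> \<Phi> (\<lambda>i. trb n (u i * x))) a = K * chi (gs a \<noteq> \<Phi> (\<lambda>i. D (u i) gs a))"
  using assms(3-5)
proof (induction A arbitrary: \<Phi> a rule: finite_induct)
  case empty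
  define b where "b = \<Phi> (\<lambda>_. False)"
  have "\<Phi> y = b" for y
    using empty.prems(1) unfolding b_def by (rule depends_only_on_empty)
  then show ?case
    by (simp only: walsh_xor_const dual chi_xor) (simp add: mult_ac)
next
  case (insert j A)
  let ?v = "u j"
  define \<Phi>\<^sub>0 where "\<Phi>\<^sub>0 = (\<lambda>y. \<Phi> (y(j := False)))"
  define \<Phi>\<^sub>1 where "\<Phi>\<^sub>1 = (\<lambda>y. \<Phi> (y(j := True)))"
  have cofactors: "\<Phi> y = (if y j then \<Phi>\<^sub>1 y else \<Phi>\<^sub>0 y)" for y
    unfolding \<Phi>\<^sub>0_def \<Phi>\<^sub>1_def by (cases "y j") (simp_all add: fun_upd_idem)
  have cofactors_depend: "depends_only_on \<Phi>\<^sub>0 A" "depends_only_on \<Phi>\<^sub>1 A"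
    unfolding \<Phi>\<^sub>0_def \<Phi>\<^sub>1_def using insert.prems(1) by (rule depends_only_on_fun_upd)+
  have IH: "walsh n (\<lambda>x. g x \<noteq> \<Phi>' (\<lambda>i. trb n (u i * x))) b
      = K * chi (gs b \<noteq> \<Phi>' (\<lambda>i. D (u i) gs b))"
    if "depends_only_on \<Phi>' A" for \<Phi>' :: "('i \<Rightarrow> bool) \<Rightarrow> bool" and b
    by (rule insert.IH[OF that]) (use insert.prems(2) in blast)
  have "D (u i) gs (a + ?v) = D (u i) gs a" if "i \<in> A" for i
    using insert.hyps(2) that by (intro D_shift insert.prems(2)) auto
  then have shift_invariant: "\<Phi>' (\<lambda>i. D (u i) gs (a + ?v)) = \<Phi>' (\<lambda>i. D (u i) gs a)"
    if "depends_only_on \<Phi>' A" for \<Phi>' :: "('i \<Rightarrow> bool) \<Rightarrow> bool"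
    using that unfolding depends_only_on_def by simp
  have gs_shift: "gs (a + ?v) = (gs a \<noteq> D ?v gs a)"
    unfolding D_def by blast
  have "2 * walsh n (\<lambda>x. g x \<noteq> \<Phi> (\<lambda>i. trb n (u i * x))) a
      = 2 * walsh n (\<lambda>x. if trb n (?v * x) then g x \<noteq> \<Phi>\<^sub>1 (\<lambda>i. trb n (u i * x))
                                          else g x \<noteq> \<Phi>\<^sub>0 (\<lambda>i. trb n (u i * x))) a"
    by (subst cofactors) (simp add: if_distrib)
  also have "\<dots> = walsh n (\<lambda>x. g x \<noteq> \<Phi>\<^sub>0 (\<lambda>i. trb n (u i * x))) a
      + walsh n (\<lambda>x. g x \<noteq> \<Phi>\<^sub>1 (\<lambda>i. trb n (u i * x))) a
      + walsh n (\<lambda>x. g x \<noteq> \<Phi>\<^sub>0 (\<lambda>i. trb n (u i * x))) (a + ?v)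
      - walsh n (\<lambda>x. g x \<noteq> \<Phi>\<^sub>1 (\<lambda>i. trb n (u i * x))) (a + ?v)"
    by (rule walsh_split_on_trace[OF trb_add])
  also have "\<dots> = K * (chi (gs a \<noteq> \<Phi>\<^sub>0 (\<lambda>i. D (u i) gs a)) + chi (gs a \<noteq> \<Phi>\<^sub>1 (\<lambda>i. D (u i) gs a))
      + chi (gs (a + ?v) \<noteq> \<Phi>\<^sub>0 (\<lambda>i. D (u i) gs a))
      - chi (gs (a + ?v) \<noteq> \<Phi>\<^sub>1 (\<lambda>i. D (u i) gs a)))"
    by (simp only: IH shift_invariant cofactors_depend) (simp add: algebra_simps)
  also have "\<dots> = 2 * (K * chi (gs a \<noteq> \<Phi> (\<lambda>i. D (u i) gs a)))"
    unfolding gs_shift chi_cofactors cofactors[of "\<lambda>i. D (u i) gs a"] by simp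
  finally show ?case by simp
qed

theorem theorem4:
  fixes g gs :: "'a::{finite,field} \<Rightarrow> bool"
    and n k \<tau> :: nat and u :: "nat \<Rightarrow> 'a" and c :: "nat set \<Rightarrow> bool"
  assumes field_card: "card (UNIV :: 'a set) = 2 ^ n"
    and char2: "(1::'a) + 1 = 0"
    and n_even: "n = 2 * k"
    and g_bent: "bent n g"
    and g_dual: "is_dual n g gs"
    and u_distinct: "inj_on u {1..\<tau>}"
    and P_tau: "\<And>i j x. 1 \<le> i \<Longrightarrow> i < j \<Longrightarrow> j \<le> \<tau> \<Longrightarrow> D (u i) (D (u j) gs) x = False"
  shows "bent n (\<lambda>x. g x \<noteq> reduced_poly_eval \<tau> c (\<lambda>i. trb n (u i * x)))
       \<and> is_dual n (\<lambda>x. g x \<noteq> reduced_poly_eval \<tau> c (\<lambda>i. trb n (u i * x)))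
                   (\<lambda>x. gs x \<noteq> reduced_poly_eval \<tau> c (\<lambda>i. D (u i) gs x))"
proof -
  have dual: "walsh n g b = 2 ^ (n div 2) * chi (gs b)" for b
    using g_dual unfolding is_dual_def chi_def by simp
  have second_derivatives: "\<not> D (u i) (D (u j) gs) x"
    if "i \<in> {1..\<tau>}" "j \<in> {1..\<tau>}" "i \<noteq> j" for i j x
    using that P_tau[of i j x] P_tau[of j i x] D_commute[of "u i" "u j" gs] by (cases "i < j") auto
  have "walsh n (\<lambda>x. g x \<noteq> reduced_poly_eval \<tau> c (\<lambda>i. trb n (u i * x))) a
      = 2 ^ (n div 2) * chi (gs a \<noteq> reduced_poly_eval \<tau> c (\<lambda>i. D (u i) gs a))" for a
    using walsh_xor_traces[OF trb_add[OF char2 field_card] dual finite_atLeastAtMost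
        reduced_poly_eval_depends_only_on second_derivatives] .
  then show ?thesis
    unfolding bent_def is_dual_def by (simp add: chi_def)
qed

end
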